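(* For any cubic graphs $G$ and $A$, a graph $G\circ A^-$ is Class $1$ if and only if $G$ and $A$ are Class $1$.
   Context: A cubic graph is Class $1$ if its chromatic index is $3$ and Class $2$ if its chromatic index is $4$. Let $G$ and $A$ be $3$-regular graphs, let $a$ be a vertex of $A$ and $A^-=A-a$. A graph $G\circ A^-$ is any graph obtained by replacing each vertex $v$ of $G$ by a copy $A^-_v$ of $A^-$ and, for each edge $uv$ of $G$, adding an edge joining a vertex of degree $2$ of $A^-_u$ to a vertex of degree $2$ of $A^-_v$, so that each degree-$2$ vertex of each copy is incident with exactly one added edge (the choices of $a$ and of these edges are arbitrary). *)

theory Defs
  imports Main
begin

definition simple_graph :: "'v set \<Rightarrow> 'v set set \<Rightarrow> bool" where
  "simple_graph V E \<longleftrightarrow> finite V \<and> (\<forall>e\<in>E. \<exists>u v. e = {u, v} \<and> u \<in> V \<and> v \<in> V \<and> u \<noteq> v)"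

definition degree :: "'v set set \<Rightarrow> 'v \<Rightarrow> nat" where
  "degree E v = card {e \<in> E. v \<in> e}"

definition cubic :: "'v set \<Rightarrow> 'v set set \<Rightarrow> bool" where
  "cubic V E \<longleftrightarrow> simple_graph V E \<and> (\<forall>v\<in>V. degree E v = 3)"

definition nbrs :: "'v set set \<Rightarrow> 'v \<Rightarrow> 'v set" where
  "nbrs E v = {u. {v, u} \<in> E}"

definition proper_edge_colouring :: "'v set set \<Rightarrow> nat \<Rightarrow> ('v set \<Rightarrow> nat) \<Rightarrow> bool" where
  "proper_edge_colouring E k c \<longleftrightarrow>
     (\<forall>e\<in>E. c e < k) \<and> (\<forall>e\<in>E. \<forall>f\<in>E. e \<noteq> f \<and> e \<inter> f \<noteq> {} \<longrightarrow> c e \<noteq> c f)"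

definition chromatic_index :: "'v set set \<Rightarrow> nat" where
  "chromatic_index E = (LEAST k. \<exists>c. proper_edge_colouring E k c)"

definition class1 :: "'v set set \<Rightarrow> bool" where
  "class1 E \<longleftrightarrow> chromatic_index E = 3"

text \<open>Vertex (v, x) is the copy of vertex x of A - a in A^-_v.
  For every vertex u of G and every neighbour v of u, \<phi> u v is the degree-2 vertex of
  A^-_u (i.e. a neighbour of a in A) used by the added edge for uv; \<phi> u must be a bijection
  from the neighbours of u in G onto the neighbours of a in A, so that every degree-2 vertex
  of every copy is incident with exactly one added edge.\<close>

definition valid_attachment ::
  "'a set \<Rightarrow> 'a set set \<Rightarrow> 'b set set \<Rightarrow> 'b \<Rightarrow> ('a \<Rightarrow> 'a \<Rightarrow> 'b) \<Rightarrow> bool" where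
  "valid_attachment VG EG EA a \<phi> \<longleftrightarrow> (\<forall>u\<in>VG. bij_betw (\<phi> u) (nbrs EG u) (nbrs EA a))"

definition comp_edges ::
  "'a set \<Rightarrow> 'a set set \<Rightarrow> 'b set set \<Rightarrow> 'b \<Rightarrow> ('a \<Rightarrow> 'a \<Rightarrow> 'b) \<Rightarrow> ('a \<times> 'b) set set" where
  "comp_edges VG EG EA a \<phi> =
     {{(v, x), (v, y)} | v x y. v \<in> VG \<and> {x, y} \<in> EA \<and> x \<noteq> a \<and> y \<noteq> a}
     \<union> {{(u, \<phi> u v), (v, \<phi> v u)} | u v. {u, v} \<in> EG}"

end

(* A cubic graph has an even number of vertices, so each copy of A - a has an odd number of
   vertices. In a 3-edge-colouring every colour class is a matching, which cannot cover an odd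
   set by itself; hence each colour appears on one of the three edges leaving a copy, i.e. these
   three edges get distinct colours. Colouring each edge of G like the corresponding connecting
   edge then colours G, and colouring the edges of A at a like the connecting edges at one copy
   colours A. Conversely, given 3-edge-colourings of G and A, colour each copy of A - a by A's
   colouring composed with a permutation of the colours chosen so that the missing colour at
   the vertex attached to uv is the colour of uv in G. *)

theory Submission
  imports Defs
begin

section \<open>Edge colourings of simple graphs\<close>

lemma simple_graph_edgeE:
  assumes "simple_graph V E" "e \<in> E" "x \<in> e"
  obtains y where "e = {x, y}" "x \<noteq> y" "x \<in> V" "y \<in> V"
  using assms unfolding simple_graph_def by (metis insertE insert_commute singletonD)

lemma simple_graph_doubleton:
  "simple_graph V E \<Longrightarrow> {x, y} \<in> E \<Longrightarrow> x \<noteq> y \<and> x \<in> V \<and> y \<in> V"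
  unfolding simple_graph_def by (metis doubleton_eq_iff)

lemma simple_graph_card_edge: "simple_graph V E \<Longrightarrow> e \<in> E \<Longrightarrow> card e = 2"
  unfolding simple_graph_def by auto

lemma simple_graph_finite_edges:
  assumes "simple_graph V E" shows "finite E"
proof -
  have "E \<subseteq> Pow V" using assms unfolding simple_graph_def by auto
  with assms show ?thesis unfolding simple_graph_def by (meson finite_Pow_iff finite_subset)
qed

lemma simple_graph_adjacent_edges:
  assumes "simple_graph V E" "e \<in> E" "f \<in> E" "e \<noteq> f" "e \<inter> f \<noteq> {}"
  obtains x y z where "e = {x, y}" "f = {x, z}" "y \<noteq> z"
proof -
  obtain x where "x \<in> e" "x \<in> f" using assms(5) by blast
  with assms(1-4) show ?thesis
    by (metis simple_graph_edgeE that)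
qed

lemma bij_betw_nbrs_edges_at:
  assumes "simple_graph V E"
  shows "bij_betw (\<lambda>u. {v, u}) (nbrs E v) {e \<in> E. v \<in> e}"
proof (rule bij_betw_imageI)
  show "inj_on (\<lambda>u. {v, u}) (nbrs E v)" by (auto simp: inj_on_def doubleton_eq_iff)
  show "(\<lambda>u. {v, u}) ` nbrs E v = {e \<in> E. v \<in> e}"
    using simple_graph_edgeE[OF assms] by (auto simp: nbrs_def image_iff) metis
qed

lemma card_nbrs: "simple_graph V E \<Longrightarrow> card (nbrs E v) = degree E v"
  unfolding degree_def by (rule bij_betw_same_card[OF bij_betw_nbrs_edges_at])

lemma handshake:
  assumes "simple_graph V E" shows "(\<Sum>v\<in>V. degree E v) = 2 * card E"
proof -
  have fV: "finite V" using assms by (simp add: simple_graph_def)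
  have "(\<Sum>v\<in>V. degree E v) = (\<Sum>v\<in>V. \<Sum>e\<in>E. if v \<in> e then 1 else 0)"
    unfolding degree_def using simple_graph_finite_edges[OF assms]
    by (simp add: sum.inter_filter[symmetric])
  also have "\<dots> = (\<Sum>e\<in>E. \<Sum>v\<in>V. if v \<in> e then 1 else 0)" by (rule sum.swap)
  also have "\<dots> = (\<Sum>e\<in>E. 2)"
  proof (rule sum.cong[OF refl])
    fix e assume "e \<in> E"
    then have "{v \<in> V. v \<in> e} = e" "card e = 2"
      using assms by (auto simp: simple_graph_def)
    then show "(\<Sum>v\<in>V. if v \<in> e then 1 else 0) = (2::nat)"
      using fV by (simp add: sum.inter_filter[symmetric])
  qed
  finally show ?thesis by simp
qed

lemma cubic_even_card: "cubic V E \<Longrightarrow> even (card V)"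
  using handshake[of V E] unfolding cubic_def by simp presburger

lemma proper_edge_colouring_exists:
  assumes "finite E" shows "\<exists>c. proper_edge_colouring E (card E) c"
proof -
  obtain h where "bij_betw h E {0..<card E}" using assms ex_bij_betw_finite_nat by blast
  then have "proper_edge_colouring E (card E) h"
    unfolding proper_edge_colouring_def bij_betw_def inj_on_def by auto
  then show ?thesis by blast
qed

lemma proper_edge_colouring_adjacent:
  "proper_edge_colouring E k c \<Longrightarrow> e \<in> E \<Longrightarrow> f \<in> E \<Longrightarrow> e \<noteq> f \<Longrightarrow> x \<in> e \<Longrightarrow> x \<in> f
    \<Longrightarrow> c e \<noteq> c f"
  unfolding proper_edge_colouring_def by blast

lemma proper_edge_colouring_inj_on_edges_at:
  "proper_edge_colouring E k c \<Longrightarrow> inj_on c {e \<in> E. s \<in> e}"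
  unfolding proper_edge_colouring_def inj_on_def by blast

lemma degree_le_colours:
  assumes "proper_edge_colouring E k c" "finite E" shows "degree E s \<le> k"
proof -
  have "c ` {e \<in> E. s \<in> e} \<subseteq> {..<k}" using assms(1) by (auto simp: proper_edge_colouring_def)
  from card_inj_on_le[OF proper_edge_colouring_inj_on_edges_at[OF assms(1)] this]
  show ?thesis by (simp add: degree_def)
qed

lemma colours_at_vertex:
  assumes c: "proper_edge_colouring E k c" and "finite E" "k \<le> degree E s"
  shows "c ` {e \<in> E. s \<in> e} = {..<k}"
proof (rule card_subset_eq)
  show "c ` {e \<in> E. s \<in> e} \<subseteq> {..<k}" using c by (auto simp: proper_edge_colouring_def)
  have "card (c ` {e \<in> E. s \<in> e}) = degree E s"
    using card_image[OF proper_edge_colouring_inj_on_edges_at[OF c]] by (simp add: degree_def)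
  with assms show "card (c ` {e \<in> E. s \<in> e}) = card {..<k}"
    using degree_le_colours[OF c] by (simp add: le_antisym)
qed simp

lemma class1_iff_3_colourable:
  assumes "finite E" "3 \<le> degree E s"
  shows "class1 E \<longleftrightarrow> (\<exists>c. proper_edge_colouring E 3 c)"
  unfolding class1_def chromatic_index_def
proof
  assume "(LEAST k. \<exists>c. proper_edge_colouring E k c) = 3"
  with LeastI_ex[of "\<lambda>k. \<exists>c. proper_edge_colouring E k c"]
  show "\<exists>c. proper_edge_colouring E 3 c"
    using proper_edge_colouring_exists[OF assms(1)] by auto
next
  assume "\<exists>c. proper_edge_colouring E 3 c"
  then show "(LEAST k. \<exists>c. proper_edge_colouring E k c) = 3"
  proof (rule Least_equality)
    fix k assume "\<exists>c. proper_edge_colouring E k c"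
    then obtain c where "proper_edge_colouring E k c" ..
    from degree_le_colours[OF this assms(1), of s] assms(2) show "3 \<le> k" by simp
  qed
qed

lemma not_class1_empty: "\<not> class1 ({} :: 'v set set)"
proof -
  have "chromatic_index ({} :: 'v set set) = 0"
    unfolding chromatic_index_def
    by (rule Least_eq_0, rule exI[of _ "\<lambda>_. 0"]) (simp add: proper_edge_colouring_def)
  then show ?thesis by (simp add: class1_def)
qed

lemma colouring_bij_betw_nbrs:
  assumes "simple_graph V E" "proper_edge_colouring E 3 c" "degree E s = 3"
  shows "bij_betw (\<lambda>v. c {s, v}) (nbrs E s) {..<3}"
proof -
  have "bij_betw c {e \<in> E. s \<in> e} {..<3}"
    using proper_edge_colouring_inj_on_edges_at[OF assms(2)]
      colours_at_vertex[OF assms(2) simple_graph_finite_edges[OF assms(1)]] assms(3)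
    by (simp add: bij_betw_def)
  from bij_betw_trans[OF bij_betw_nbrs_edges_at[OF assms(1)] this] show ?thesis
    by (simp add: comp_def)
qed

lemma colour_class_leaves_odd_set:
  assumes c: "proper_edge_colouring E 3 c" and "finite E" and two: "\<forall>e\<in>E. card e = 2"
    and S: "finite S" "odd (card S)" "\<forall>s\<in>S. 3 \<le> degree E s" and i: "i < 3"
  shows "\<exists>e\<in>E. c e = i \<and> e \<inter> S \<noteq> {} \<and> \<not> e \<subseteq> S"
proof (rule ccontr)
  assume stays: "\<not> ?thesis"
  define M where "M = {e \<in> E. c e = i \<and> e \<subseteq> S}"
  have "S \<subseteq> \<Union>M"
  proof
    fix s assume "s \<in> S"
    then have "i \<in> c ` {e \<in> E. s \<in> e}" using colours_at_vertex[OF c \<open>finite E\<close>] S i by auto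
    then obtain e where "e \<in> E" "s \<in> e" "c e = i" by auto
    with stays \<open>s \<in> S\<close> show "s \<in> \<Union>M" by (auto simp: M_def)
  qed
  then have "S = \<Union>M" by (auto simp: M_def)
  moreover have "pairwise disjnt M"
    using c by (auto simp: M_def pairwise_def disjnt_def proper_edge_colouring_def)
  moreover have card_M: "card e = 2" if "e \<in> M" for e using two that by (auto simp: M_def)
  ultimately have "card S = sum card M"
    by (metis card_Union_disjoint card.infinite zero_neq_numeral)
  also have "\<dots> = 2 * card M" using card_M by simp
  finally have "card S = 2 * card M" .
  with S show False by simp
qed

lemma bij_betw_relabel:
  assumes f: "bij_betw f X K" and g: "bij_betw g X K"
  shows "\<exists>\<pi>. bij_betw \<pi> K K \<and> (\<forall>x\<in>X. \<pi> (f x) = g x)"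
proof (intro exI conjI ballI)
  show "bij_betw (g \<circ> inv_into X f) K K" by (rule bij_betw_trans[OF bij_betw_inv_into[OF f] g])
  show "(g \<circ> inv_into X f) (f x) = g x" if "x \<in> X" for x
    using f that by (simp add: bij_betw_def)
qed

section \<open>The composite graph\<close>

definition link :: "('a \<Rightarrow> 'a \<Rightarrow> 'b) \<Rightarrow> 'a set \<Rightarrow> ('a \<times> 'b) set" where
  "link \<phi> g = {(p, \<phi> p q) | p q. g = {p, q}}"

lemma link_doubleton: "link \<phi> {u, v} = {(u, \<phi> u v), (v, \<phi> v u)}"
  by (auto simp: link_def doubleton_eq_iff)

lemma fst_link_subset: "fst ` link \<phi> g \<subseteq> g"
  by (auto simp: link_def)

text \<open>A colouring of the composite graph is read off its edges by their first coordinates: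
  an edge inside the copy of w projects to the singleton {w}, a connecting edge onto an edge of G.\<close>
definition comp_colouring ::
  "('a \<Rightarrow> nat \<Rightarrow> nat) \<Rightarrow> ('b set \<Rightarrow> nat) \<Rightarrow> ('a set \<Rightarrow> nat) \<Rightarrow> ('a \<times> 'b) set \<Rightarrow> nat" where
  "comp_colouring \<pi> cA cG ed =
     (if \<exists>w. fst ` ed = {w} then \<pi> (the_elem (fst ` ed)) (cA (snd ` ed)) else cG (fst ` ed))"

locale composite =
  fixes VG :: "'a set" and EG :: "'a set set" and VA :: "'b set" and EA :: "'b set set"
    and a :: 'b and \<phi> :: "'a \<Rightarrow> 'a \<Rightarrow> 'b"
  assumes cubic_G: "cubic VG EG" and cubic_A: "cubic VA EA" and a_in_VA: "a \<in> VA"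
    and attachment: "valid_attachment VG EG EA a \<phi>"
begin

abbreviation C :: "('a \<times> 'b) set set" where
  "C \<equiv> comp_edges VG EG EA a \<phi>"

lemma simple_G: "simple_graph VG EG" and simple_A: "simple_graph VA EA"
  using cubic_G cubic_A by (simp_all add: cubic_def)

lemma degree_G: "u \<in> VG \<Longrightarrow> degree EG u = 3" and degree_A: "x \<in> VA \<Longrightarrow> degree EA x = 3"
  using cubic_G cubic_A by (simp_all add: cubic_def)

lemma nbrs_G: "v \<in> nbrs EG u \<Longrightarrow> u \<in> VG \<and> v \<in> VG \<and> u \<noteq> v \<and> {u, v} \<in> EG"
  using simple_graph_doubleton[OF simple_G] by (simp add: nbrs_def)

lemma nbrs_a: "x \<in> nbrs EA a \<Longrightarrow> x \<in> VA \<and> x \<noteq> a \<and> {a, x} \<in> EA"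
  using simple_graph_doubleton[OF simple_A, of a x] by (auto simp: nbrs_def)

lemma card_nbrs_a: "card (nbrs EA a) = 3"
  using card_nbrs[OF simple_A] degree_A[OF a_in_VA] by simp

definition \<psi> :: "'a \<Rightarrow> 'b \<Rightarrow> 'a" where
  "\<psi> u = inv_into (nbrs EG u) (\<phi> u)"

lemma bij_\<phi>: "u \<in> VG \<Longrightarrow> bij_betw (\<phi> u) (nbrs EG u) (nbrs EA a)"
  using attachment by (simp add: valid_attachment_def)

lemma bij_\<psi>: "u \<in> VG \<Longrightarrow> bij_betw (\<psi> u) (nbrs EA a) (nbrs EG u)"
  unfolding \<psi>_def by (rule bij_betw_inv_into[OF bij_\<phi>])

lemma \<phi>_\<psi>: "u \<in> VG \<Longrightarrow> x \<in> nbrs EA a \<Longrightarrow> \<phi> u (\<psi> u x) = x"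
  unfolding \<psi>_def using bij_\<phi> by (metis bij_betw_def f_inv_into_f)

lemma \<psi>_\<phi>: "v \<in> nbrs EG u \<Longrightarrow> \<psi> u (\<phi> u v) = v"
  unfolding \<psi>_def using bij_\<phi> nbrs_G by (metis bij_betw_def inv_into_f_f)

lemma \<phi>_in_nbrs: "v \<in> nbrs EG u \<Longrightarrow> \<phi> u v \<in> nbrs EA a"
  using bij_\<phi> nbrs_G by (meson bij_betwE)

lemma comp_edgesE:
  assumes "ed \<in> C"
  obtains (copy) w e where "w \<in> VG" "e \<in> EA" "a \<notin> e" "ed = Pair w ` e"
    | (link) g where "g \<in> EG" "ed = link \<phi> g"
  using assms unfolding comp_edges_def by (auto simp: link_doubleton)

lemma copy_edge_in:
  assumes "w \<in> VG" "e \<in> EA" "a \<notin> e" shows "Pair w ` e \<in> C"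
proof -
  obtain x y where "e = {x, y}" using simple_A assms(2) unfolding simple_graph_def by blast
  with assms show ?thesis unfolding comp_edges_def by blast
qed

lemma link_in:
  assumes "g \<in> EG" shows "link \<phi> g \<in> C"
proof -
  obtain u v where "g = {u, v}" using simple_G assms unfolding simple_graph_def by blast
  with assms show ?thesis unfolding comp_edges_def by (auto simp: link_doubleton)
qed

lemma simple_graph_comp: "simple_graph (VG \<times> VA) C"
  unfolding simple_graph_def
proof (intro conjI ballI)
  show "finite (VG \<times> VA)" using simple_G simple_A by (simp add: simple_graph_def)
next
  fix ed assume "ed \<in> C"
  then show "\<exists>p q. ed = {p, q} \<and> p \<in> VG \<times> VA \<and> q \<in> VG \<times> VA \<and> p \<noteq> q"
  proof (cases rule: comp_edgesE)
    case (copy w e)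
    then obtain x y where "e = {x, y}" "x \<noteq> y" "x \<in> VA" "y \<in> VA"
      using simple_A unfolding simple_graph_def by blast
    moreover from this copy have "ed = {(w, x), (w, y)}" by simp
    ultimately show ?thesis using copy(1) by blast
  next
    case (link g)
    obtain u v where "g = {u, v}" using simple_G link(1) unfolding simple_graph_def by blast
    with link(1) have uv: "v \<in> nbrs EG u" "g = {u, v}" by (simp_all add: nbrs_def)
    then have "u \<in> nbrs EG v" by (simp add: nbrs_def insert_commute)
    have "u \<in> VG" "v \<in> VG" "u \<noteq> v" using nbrs_G[OF uv(1)] by simp_all
    moreover have "\<phi> u v \<in> VA" "\<phi> v u \<in> VA"
      using nbrs_a[OF \<phi>_in_nbrs[OF uv(1)]] nbrs_a[OF \<phi>_in_nbrs[OF \<open>u \<in> nbrs EG v\<close>]] by simp_all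
    moreover have "ed = {(u, \<phi> u v), (v, \<phi> v u)}" using link uv by (simp add: link_doubleton)
    ultimately show ?thesis by blast
  qed
qed

lemma finite_comp_edges: "finite C"
  by (rule simple_graph_finite_edges[OF simple_graph_comp])

text \<open>A copy of A inside the composite graph at u: the edges at a become the connecting edges
  leaving the copy of u.\<close>
definition lift :: "'a \<Rightarrow> 'b set \<Rightarrow> ('a \<times> 'b) set" where
  "lift u e = (if a \<in> e then link \<phi> {u, \<psi> u (the_elem (e - {a}))} else Pair u ` e)"

lemma lift_at_a: "x \<noteq> a \<Longrightarrow> lift u {a, x} = link \<phi> {u, \<psi> u x}"
proof -
  assume "x \<noteq> a"
  then have "{a, x} - {a} = {x}" by auto
  then show ?thesis by (simp add: lift_def)
qed

lemma lift_in:
  assumes u: "u \<in> VG" and e: "e \<in> EA" shows "lift u e \<in> C"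
proof (cases "a \<in> e")
  case True
  then obtain x where x: "e = {a, x}" "x \<noteq> a" using simple_graph_edgeE[OF simple_A e] by metis
  then have "\<psi> u x \<in> nbrs EG u" using bij_\<psi>[OF u] e by (auto simp: nbrs_def bij_betw_def)
  then show ?thesis using x lift_at_a link_in by (simp add: nbrs_def)
next
  case False
  then show ?thesis using copy_edge_in[OF u e] by (simp add: lift_def)
qed

lemma mem_lift:
  assumes u: "u \<in> VG" and e: "e \<in> EA" "x \<in> e" and "x \<noteq> a" shows "(u, x) \<in> lift u e"
proof (cases "a \<in> e")
  case True
  obtain y where "e = {x, y}" using simple_graph_edgeE[OF simple_A e] by metis
  with True \<open>x \<noteq> a\<close> have "e = {a, x}" by auto
  moreover have "x \<in> nbrs EA a" using e calculation by (simp add: nbrs_def)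
  ultimately show ?thesis using lift_at_a \<phi>_\<psi>[OF u] \<open>x \<noteq> a\<close> by (simp add: link_doubleton)
next
  case False
  then show ?thesis using e by (simp add: lift_def)
qed

lemma inj_on_lift:
  assumes u: "u \<in> VG" shows "inj_on (lift u) EA"
proof -
  have recover: "e - {a} = {x. x \<noteq> a \<and> (u, x) \<in> lift u e} \<and> (a \<in> e \<longleftrightarrow> \<not> fst ` lift u e \<subseteq> {u})"
    if e: "e \<in> EA" for e
  proof (cases "a \<in> e")
    case True
    then obtain x where x: "e = {a, x}" "x \<noteq> a" using simple_graph_edgeE[OF simple_A e] by metis
    then have "x \<in> nbrs EA a" using e by (simp add: nbrs_def)
    define v where "v = \<psi> u x"
    have "v \<in> nbrs EG u" "\<phi> u v = x"
      using bij_\<psi>[OF u] \<phi>_\<psi>[OF u] \<open>x \<in> nbrs EA a\<close> by (auto simp: bij_betw_def v_def)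
    then have "u \<noteq> v" "lift u e = {(u, x), (v, \<phi> v u)}"
      using nbrs_G x lift_at_a by (auto simp: link_doubleton v_def)
    with x show ?thesis by auto
  next
    case False
    then show ?thesis by (auto simp: lift_def)
  qed
  show ?thesis
  proof (rule inj_onI)
    fix e f assume "e \<in> EA" "f \<in> EA" "lift u e = lift u f"
    with recover[of e] recover[of f] have "e - {a} = f - {a}" "a \<in> e \<longleftrightarrow> a \<in> f" by simp_all
    then show "e = f" by blast
  qed
qed

lemma degree_copy_vertex:
  assumes u: "u \<in> VG" and x: "x \<in> VA" "x \<noteq> a" shows "3 \<le> degree C (u, x)"
proof -
  have "lift u ` {e \<in> EA. x \<in> e} \<subseteq> {ed \<in> C. (u, x) \<in> ed}"
    using lift_in[OF u] mem_lift[OF u] x by auto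
  from card_inj_on_le[OF inj_on_subset[OF inj_on_lift[OF u]] this] finite_comp_edges
  have "degree EA x \<le> degree C (u, x)" by (auto simp: degree_def)
  with degree_A[OF x(1)] show ?thesis by simp
qed

lemma crossing_edge_is_link:
  assumes "ed \<in> C" "ed \<inter> {u} \<times> (VA - {a}) \<noteq> {}" "\<not> ed \<subseteq> {u} \<times> (VA - {a})"
  shows "\<exists>v\<in>nbrs EG u. ed = link \<phi> {u, v}"
  using assms(1)
proof (cases rule: comp_edgesE)
  case (copy w e)
  moreover have "e \<subseteq> VA" using simple_A copy(2) by (auto simp: simple_graph_def)
  ultimately show ?thesis using assms(2,3) by auto
next
  case (link g)
  then obtain p q where "g = {p, q}" using simple_G by (auto simp: simple_graph_def)
  with link assms(2) show ?thesis by (auto simp: nbrs_def link_doubleton insert_commute)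
qed

lemma link_colours_inj:
  assumes c: "proper_edge_colouring C 3 c" and u: "u \<in> VG"
  shows "inj_on (\<lambda>v. c (link \<phi> {u, v})) (nbrs EG u)"
proof -
  let ?S = "{u} \<times> (VA - {a})"
  let ?colour = "\<lambda>v. c (link \<phi> {u, v})"
  have "finite VA" using simple_A by (simp add: simple_graph_def)
  then have "card ?S = card VA - 1" "0 < card VA"
    using a_in_VA card_gt_0_iff by (auto simp: card_cartesian_product_singleton)
  with cubic_even_card[OF cubic_A] have odd: "odd (card ?S)" by presburger
  have deg: "\<forall>s\<in>?S. 3 \<le> degree C s" using degree_copy_vertex[OF u] by auto
  have two: "\<forall>ed\<in>C. card ed = 2" using simple_graph_card_edge[OF simple_graph_comp] by blast
  have "finite ?S" using \<open>finite VA\<close> by simp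
  have hit: "i \<in> ?colour ` nbrs EG u" if i: "i < 3" for i
  proof -
    obtain ed where ed: "ed \<in> C" "c ed = i" "ed \<inter> ?S \<noteq> {}" "\<not> ed \<subseteq> ?S"
      using colour_class_leaves_odd_set[OF c finite_comp_edges two \<open>finite ?S\<close> odd deg i] by blast
    then obtain v where "v \<in> nbrs EG u" "ed = link \<phi> {u, v}"
      using crossing_edge_is_link by blast
    with ed(2) show ?thesis by blast
  qed
  have card3: "card (nbrs EG u) = 3" using card_nbrs[OF simple_G] degree_G[OF u] by simp
  then have fin: "finite (nbrs EG u)" using card.infinite by fastforce
  have "card (?colour ` nbrs EG u) = card (nbrs EG u)"
  proof (rule le_antisym)
    show "card (?colour ` nbrs EG u) \<le> card (nbrs EG u)" by (rule card_image_le[OF fin])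
    have "{..<3} \<subseteq> ?colour ` nbrs EG u" using hit by blast
    from card_mono[OF finite_imageI[OF fin] this] card3
    show "card (nbrs EG u) \<le> card (?colour ` nbrs EG u)" by simp
  qed
  with inj_on_iff_eq_card[OF fin] show ?thesis by blast
qed

lemma proper_colouring_G:
  assumes c: "proper_edge_colouring C 3 c" shows "proper_edge_colouring EG 3 (c \<circ> link \<phi>)"
  unfolding proper_edge_colouring_def
proof (intro conjI ballI impI)
  fix g assume "g \<in> EG"
  then show "(c \<circ> link \<phi>) g < 3" using c link_in by (auto simp: proper_edge_colouring_def)
next
  fix e f assume "e \<in> EG" "f \<in> EG" "e \<noteq> f \<and> e \<inter> f \<noteq> {}"
  then obtain u v w where uvw: "e = {u, v}" "f = {u, w}" "v \<noteq> w"
    by (meson simple_graph_adjacent_edges[OF simple_G])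
  with \<open>e \<in> EG\<close> \<open>f \<in> EG\<close> have "v \<in> nbrs EG u" "w \<in> nbrs EG u" by (simp_all add: nbrs_def)
  with link_colours_inj[OF c] nbrs_G uvw show "(c \<circ> link \<phi>) e \<noteq> (c \<circ> link \<phi>) f"
    by (metis comp_apply inj_onD)
qed

lemma proper_colouring_A:
  assumes c: "proper_edge_colouring C 3 c" and u: "u \<in> VG"
  shows "proper_edge_colouring EA 3 (c \<circ> lift u)"
  unfolding proper_edge_colouring_def
proof (intro conjI ballI impI)
  fix e assume "e \<in> EA"
  then show "(c \<circ> lift u) e < 3" using c lift_in[OF u] by (auto simp: proper_edge_colouring_def)
next
  fix e f assume ef: "e \<in> EA" "f \<in> EA" "e \<noteq> f \<and> e \<inter> f \<noteq> {}"
  then obtain x y z where xyz: "e = {x, y}" "f = {x, z}" "y \<noteq> z"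
    by (meson simple_graph_adjacent_edges[OF simple_A])
  show "(c \<circ> lift u) e \<noteq> (c \<circ> lift u) f"
  proof (cases "x = a")
    case True
    with ef xyz have yz: "y \<in> nbrs EA a" "z \<in> nbrs EA a" by (simp_all add: nbrs_def)
    then have "\<psi> u y \<noteq> \<psi> u z" "\<psi> u y \<in> nbrs EG u" "\<psi> u z \<in> nbrs EG u"
      using bij_\<psi>[OF u] xyz(3) by (auto simp: bij_betw_def inj_on_def)
    with link_colours_inj[OF c u] have "c (link \<phi> {u, \<psi> u y}) \<noteq> c (link \<phi> {u, \<psi> u z})"
      by (meson inj_onD)
    with True xyz yz nbrs_a show ?thesis by (simp add: lift_at_a)
  next
    case False
    then have "(u, x) \<in> lift u e" "(u, x) \<in> lift u f" using mem_lift[OF u] ef xyz by auto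
    moreover have "lift u e \<noteq> lift u f" using inj_on_lift[OF u] ef by (meson inj_onD)
    ultimately show ?thesis
      using proper_edge_colouring_adjacent[OF c lift_in[OF u ef(1)] lift_in[OF u ef(2)]] by simp
  qed
qed

text \<open>In the copy of u, permute the colours of A so that the edge from a to \<phi> u v gets the
  colour of uv in G; then that colour is free at \<phi> u v for the connecting edge.\<close>
lemma copy_permutations:
  assumes cG: "proper_edge_colouring EG 3 cG" and cA: "proper_edge_colouring EA 3 cA"
  obtains \<pi> where "\<And>u. u \<in> VG \<Longrightarrow> bij_betw (\<pi> u) {..<3} {..<3}"
    and "\<And>u v. v \<in> nbrs EG u \<Longrightarrow> \<pi> u (cA {a, \<phi> u v}) = cG {u, v}"
proof -
  have "\<exists>p. bij_betw p {..<3} {..<3} \<and> (\<forall>x\<in>nbrs EA a. p (cA {a, x}) = cG {u, \<psi> u x})"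
    if u: "u \<in> VG" for u
  proof (rule bij_betw_relabel)
    show "bij_betw (\<lambda>x. cA {a, x}) (nbrs EA a) {..<3}"
      by (rule colouring_bij_betw_nbrs[OF simple_A cA degree_A[OF a_in_VA]])
    show "bij_betw (\<lambda>x. cG {u, \<psi> u x}) (nbrs EA a) {..<3}"
      using bij_betw_trans[OF bij_\<psi>[OF u] colouring_bij_betw_nbrs[OF simple_G cG degree_G[OF u]]]
      by (simp add: comp_def)
  qed
  then obtain \<pi> where "\<forall>u\<in>VG. bij_betw (\<pi> u) {..<3} {..<3}
      \<and> (\<forall>x\<in>nbrs EA a. \<pi> u (cA {a, x}) = cG {u, \<psi> u x})"
    by metis
  with that show ?thesis using nbrs_G \<phi>_in_nbrs \<psi>_\<phi> by metis
qed

lemma comp_colouring_copy: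
  assumes "e \<in> EA" shows "comp_colouring \<pi> cA cG (Pair w ` e) = \<pi> w (cA e)"
proof -
  have "e \<noteq> {}" using simple_graph_card_edge[OF simple_A assms] by auto
  then show ?thesis by (simp add: comp_colouring_def image_image image_constant_conv)
qed

lemma comp_colouring_link:
  assumes "g \<in> EG" shows "comp_colouring \<pi> cA cG (link \<phi> g) = cG g"
proof -
  obtain u v where "g = {u, v}" "u \<noteq> v" using simple_G assms unfolding simple_graph_def by blast
  then show ?thesis by (auto simp: comp_colouring_def link_doubleton doubleton_eq_iff)
qed

lemma comp_colouring_copy_link:
  assumes cA: "proper_edge_colouring EA 3 cA"
    and \<pi>_bij: "\<And>u. u \<in> VG \<Longrightarrow> bij_betw (\<pi> u) {..<3} {..<3}"
    and \<pi>_link: "\<And>u v. v \<in> nbrs EG u \<Longrightarrow> \<pi> u (cA {a, \<phi> u v}) = cG {u, v}"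
    and w: "w \<in> VG" and e: "e \<in> EA" "a \<notin> e" and g: "g \<in> EG" and meet: "Pair w ` e \<inter> link \<phi> g \<noteq> {}"
  shows "comp_colouring \<pi> cA cG (Pair w ` e) \<noteq> comp_colouring \<pi> cA cG (link \<phi> g)"
proof -
  obtain p q where pq: "g = {p, q}" using simple_G g unfolding simple_graph_def by blast
  with meet have "(w = p \<and> \<phi> p q \<in> e) \<or> (w = q \<and> \<phi> q p \<in> e)"
    by (auto simp: link_doubleton)
  then obtain v where v: "g = {w, v}" "\<phi> w v \<in> e" using pq by (metis insert_commute)
  then have "v \<in> nbrs EG w" using g by (simp add: nbrs_def)
  then have a_edge: "{a, \<phi> w v} \<in> EA" using nbrs_a \<phi>_in_nbrs by blast
  have "cA e \<noteq> cA {a, \<phi> w v}"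
    using e v(2) by (intro proper_edge_colouring_adjacent[OF cA e(1) a_edge]) auto
  moreover have "cA e < 3" "cA {a, \<phi> w v} < 3"
    using cA e(1) a_edge by (simp_all add: proper_edge_colouring_def)
  ultimately have "\<pi> w (cA e) \<noteq> \<pi> w (cA {a, \<phi> w v})"
    using bij_betw_imp_inj_on[OF \<pi>_bij[OF w]] by (auto dest: inj_onD)
  moreover have "\<pi> w (cA {a, \<phi> w v}) = cG g" using \<pi>_link[OF \<open>v \<in> nbrs EG w\<close>] v(1) by simp
  ultimately show ?thesis by (simp add: comp_colouring_copy[OF e(1)] comp_colouring_link[OF g])
qed

lemma proper_comp_colouring:
  assumes cG: "proper_edge_colouring EG 3 cG" and cA: "proper_edge_colouring EA 3 cA"
    and \<pi>_bij: "\<And>u. u \<in> VG \<Longrightarrow> bij_betw (\<pi> u) {..<3} {..<3}"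
    and \<pi>_link: "\<And>u v. v \<in> nbrs EG u \<Longrightarrow> \<pi> u (cA {a, \<phi> u v}) = cG {u, v}"
  shows "proper_edge_colouring C 3 (comp_colouring \<pi> cA cG)"
  unfolding proper_edge_colouring_def
proof (intro conjI ballI impI)
  fix ed assume "ed \<in> C"
  then show "comp_colouring \<pi> cA cG ed < 3"
  proof (cases rule: comp_edgesE)
    case (copy w e)
    with cA have "cA e < 3" by (simp add: proper_edge_colouring_def)
    with copy bij_betwE[OF \<pi>_bij[OF copy(1)]] show ?thesis by (simp add: comp_colouring_copy)
  next
    case (link g)
    with cG show ?thesis by (simp add: comp_colouring_link proper_edge_colouring_def)
  qed
next
  fix ed ed' assume "ed \<in> C" "ed' \<in> C" and adj: "ed \<noteq> ed' \<and> ed \<inter> ed' \<noteq> {}"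
  from \<open>ed \<in> C\<close> \<open>ed' \<in> C\<close>
  show "comp_colouring \<pi> cA cG ed \<noteq> comp_colouring \<pi> cA cG ed'"
  proof (cases rule: comp_edgesE[case_product comp_edgesE])
    case (copy_copy w e w' e')
    with adj obtain y where "w = w'" "e \<noteq> e'" "y \<in> e" "y \<in> e'" by auto
    with copy_copy have "cA e \<noteq> cA e'" by (intro proper_edge_colouring_adjacent[OF cA]) auto
    moreover have "cA e < 3" "cA e' < 3" using cA copy_copy by (simp_all add: proper_edge_colouring_def)
    ultimately show ?thesis using bij_betw_imp_inj_on[OF \<pi>_bij[OF copy_copy(1)]] copy_copy \<open>w = w'\<close>
      by (auto simp: comp_colouring_copy dest: inj_onD)
  next
    case (copy_link w e g)
    with adj show ?thesis
      using comp_colouring_copy_link[OF cA \<pi>_bij \<pi>_link copy_link(1-3,5)]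
      by simp
  next
    case (link_copy g w e)
    with adj show ?thesis
      using comp_colouring_copy_link[OF cA \<pi>_bij \<pi>_link link_copy(3-5,1)]
      by (metis inf_commute)
  next
    case (link_link g g')
    then have "g \<noteq> g'" "g \<inter> g' \<noteq> {}"
      using adj fst_link_subset[of \<phi> g] fst_link_subset[of \<phi> g'] by blast+
    with cG link_link show ?thesis by (simp add: comp_colouring_link proper_edge_colouring_def)
  qed
qed

lemma colourable_of_factors:
  assumes "proper_edge_colouring EG 3 cG" "proper_edge_colouring EA 3 cA"
  shows "\<exists>c. proper_edge_colouring C 3 c"
  by (metis assms copy_permutations proper_comp_colouring)

end

theorem proposition5p21:
  fixes VG :: "'a set" and EG :: "'a set set"
    and VA :: "'b set" and EA :: "'b set set"
    and a :: 'b and \<phi> :: "'a \<Rightarrow> 'a \<Rightarrow> 'b"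
  assumes "cubic VG EG" and "cubic VA EA" and "a \<in> VA"
    and "valid_attachment VG EG EA a \<phi>"
  shows "class1 (comp_edges VG EG EA a \<phi>) \<longleftrightarrow> class1 EG \<and> class1 EA"
proof -
  interpret composite VG EG VA EA a \<phi> using assms by unfold_locales
  show ?thesis
  proof (cases "VG = {}")
    case True
    then have "EG = {}" using simple_G unfolding simple_graph_def by fastforce
    with True have "C = {}" by (simp add: comp_edges_def)
    with \<open>EG = {}\<close> show ?thesis using not_class1_empty by metis
  next
    case False
    then obtain u where u: "u \<in> VG" by blast
    obtain x where "x \<in> nbrs EA a" using card_nbrs_a by fastforce
    then have "x \<in> VA" "x \<noteq> a" using nbrs_a by simp_all
    have "class1 C \<longleftrightarrow> (\<exists>c. proper_edge_colouring C 3 c)"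
      using degree_copy_vertex[OF u \<open>x \<in> VA\<close> \<open>x \<noteq> a\<close>]
      by (rule class1_iff_3_colourable[OF finite_comp_edges])
    moreover have "class1 EG \<longleftrightarrow> (\<exists>c. proper_edge_colouring EG 3 c)"
      using class1_iff_3_colourable[OF simple_graph_finite_edges[OF simple_G], of u] degree_G[OF u]
      by simp
    moreover have "class1 EA \<longleftrightarrow> (\<exists>c. proper_edge_colouring EA 3 c)"
      using class1_iff_3_colourable[OF simple_graph_finite_edges[OF simple_A], of a] degree_A[OF a_in_VA]
      by simp
    ultimately show ?thesis
      using proper_colouring_G proper_colouring_A[OF _ u] colourable_of_factors by metis
  qed
qed

end
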